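(* Let $k\geq 2$ be an integer and let $G$ be a graph on $n$ vertices with minimum degree $\delta=\delta(G)>\frac{(k-1)n}{k}$. Suppose $V(G)$ is partitioned into classes $U_1,U_2,X_1,\dots,X_{k-1},A$ such that (a) there are no edges between $U_1$ and $U_2$; (b) all copies of $K_k$ in $G$ consisting of an edge of $G[U_1]$ together with one vertex from each of $X_1,\dots,X_{k-2}$ are pairwise $K_{k+1}$-connected; (c) $|X_i|\leq n-\delta$ for $i\in[k-1]$; (d) $X_i\cap\Gamma(g)$ is an independent set for each $i\in[k-2]$ and each copy $g$ of $K_{i+1}$ consisting of an edge of $G[U_1]$ together with one vertex from each of $X_1,\dots,X_{i-1}$. Let $F$ be a matching in $G[U_1]$ and set $q:=k\delta-(k-1)n+|U_2|-|U_1|-|A|$. Then $G$ contains a connected $K_{k+1}$-factor of size at least $(k+1)\min\{|F|,q\}$.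
   Context: A $K_{k+1}$-walk in $G$ is a sequence of copies of $K_k$ in which consecutive copies lie in a common copy of $K_{k+1}$; its endpoints are then $K_{k+1}$-connected; the equivalence classes of copies of $K_k$ are the $K_{k+1}$-components. A $K_{k+1}$-factor is a set of vertex-disjoint copies of $K_{k+1}$; it is connected if all copies of $K_k$ contained in its members lie in one component; its size is the number of vertices it covers. $\Gamma(g)$ is the common neighbourhood of the vertices of $g$. *)

theory Defs
  imports Main
begin

definition simple_graph :: "'a set \<Rightarrow> ('a \<Rightarrow> 'a \<Rightarrow> bool) \<Rightarrow> bool" where
  "simple_graph V E \<longleftrightarrow> finite V \<and>
     (\<forall>u v. E u v \<longrightarrow> u \<in> V \<and> v \<in> V \<and> u \<noteq> v \<and> E v u)"

definition degree :: "'a set \<Rightarrow> ('a \<Rightarrow> 'a \<Rightarrow> bool) \<Rightarrow> 'a \<Rightarrow> nat" where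
  "degree V E v = card {u \<in> V. E v u}"

definition min_degree :: "'a set \<Rightarrow> ('a \<Rightarrow> 'a \<Rightarrow> bool) \<Rightarrow> nat" where
  "min_degree V E = Min (degree V E ` V)"

definition is_clique :: "'a set \<Rightarrow> ('a \<Rightarrow> 'a \<Rightarrow> bool) \<Rightarrow> 'a set \<Rightarrow> bool" where
  "is_clique V E C \<longleftrightarrow> C \<subseteq> V \<and> (\<forall>u\<in>C. \<forall>v\<in>C. u \<noteq> v \<longrightarrow> E u v)"

definition copy_K :: "'a set \<Rightarrow> ('a \<Rightarrow> 'a \<Rightarrow> bool) \<Rightarrow> nat \<Rightarrow> 'a set \<Rightarrow> bool" where
  "copy_K V E r C \<longleftrightarrow> is_clique V E C \<and> finite C \<and> card C = r"

definition independent :: "('a \<Rightarrow> 'a \<Rightarrow> bool) \<Rightarrow> 'a set \<Rightarrow> bool" where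
  "independent E S \<longleftrightarrow> (\<forall>u\<in>S. \<forall>v\<in>S. \<not> E u v)"

definition Gamma :: "'a set \<Rightarrow> ('a \<Rightarrow> 'a \<Rightarrow> bool) \<Rightarrow> 'a set \<Rightarrow> 'a set" where
  "Gamma V E g = {v \<in> V. \<forall>u\<in>g. E u v}"

definition Kstep :: "'a set \<Rightarrow> ('a \<Rightarrow> 'a \<Rightarrow> bool) \<Rightarrow> nat \<Rightarrow> 'a set \<Rightarrow> 'a set \<Rightarrow> bool" where
  "Kstep V E k g h \<longleftrightarrow> copy_K V E k g \<and> copy_K V E k h \<and>
     (\<exists>K. copy_K V E (k+1) K \<and> g \<subseteq> K \<and> h \<subseteq> K)"

definition Kconnected :: "'a set \<Rightarrow> ('a \<Rightarrow> 'a \<Rightarrow> bool) \<Rightarrow> nat \<Rightarrow> 'a set \<Rightarrow> 'a set \<Rightarrow> bool" where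
  "Kconnected V E k g h \<longleftrightarrow> copy_K V E k g \<and> copy_K V E k h \<and> (Kstep V E k)\<^sup>*\<^sup>* g h"

definition Kfactor :: "'a set \<Rightarrow> ('a \<Rightarrow> 'a \<Rightarrow> bool) \<Rightarrow> nat \<Rightarrow> 'a set set \<Rightarrow> bool" where
  "Kfactor V E k \<F> \<longleftrightarrow> finite \<F> \<and> (\<forall>K\<in>\<F>. copy_K V E (k+1) K) \<and>
     (\<forall>K\<in>\<F>. \<forall>L\<in>\<F>. K \<noteq> L \<longrightarrow> K \<inter> L = {})"

definition connected_Kfactor :: "'a set \<Rightarrow> ('a \<Rightarrow> 'a \<Rightarrow> bool) \<Rightarrow> nat \<Rightarrow> 'a set set \<Rightarrow> bool" where
  "connected_Kfactor V E k \<F> \<longleftrightarrow> Kfactor V E k \<F> \<and>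
     (\<forall>g h. (\<exists>K\<in>\<F>. g \<subseteq> K) \<and> copy_K V E k g \<and> (\<exists>L\<in>\<F>. h \<subseteq> L) \<and> copy_K V E k h
        \<longrightarrow> Kconnected V E k g h)"

definition factor_size :: "'a set set \<Rightarrow> nat" where
  "factor_size \<F> = card (\<Union>\<F>)"

definition edge_transversal ::
  "'a set \<Rightarrow> ('a \<Rightarrow> 'a \<Rightarrow> bool) \<Rightarrow> 'a set \<Rightarrow> (nat \<Rightarrow> 'a set) \<Rightarrow> nat \<Rightarrow> 'a set \<Rightarrow> bool" where
  "edge_transversal V E U1 X j g \<longleftrightarrow>
     (\<exists>u v x. u \<in> U1 \<and> v \<in> U1 \<and> E u v \<and> (\<forall>i\<in>{1..j}. x i \<in> X i) \<and>
        g = {u, v} \<union> x ` {1..j} \<and> copy_K V E (j+2) g)"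

definition matching_in :: "('a \<Rightarrow> 'a \<Rightarrow> bool) \<Rightarrow> 'a set \<Rightarrow> 'a set set \<Rightarrow> bool" where
  "matching_in E U M \<longleftrightarrow> (\<forall>e\<in>M. \<exists>u v. e = {u, v} \<and> u \<in> U \<and> v \<in> U \<and> E u v) \<and>
     (\<forall>e\<in>M. \<forall>f\<in>M. e \<noteq> f \<longrightarrow> e \<inter> f = {})"

end

theory Submission
  imports Defs
begin

text \<open>The factor is built greedily. The edges \<open>uv\<close> of a suitable subset of \<open>F\<close> are treated one after
  another; each is extended to a copy \<open>{u, v, x\<^sub>1, \<dots>, x\<^bsub>k-1\<^esub>}\<close> of \<open>K\<^bsub>k+1\<^esub>\<close> with \<open>x\<^sub>i \<in> X\<^sub>i\<close>
  taken from the common neighbourhood of the vertices chosen before and outside the cliques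
  built so far. Every vertex has at most \<open>n - \<delta>\<close> non-neighbours and \<open>U\<^sub>2\<close> is missed by both \<open>u\<close>
  and \<open>v\<close>, so by (a) and (c) at least \<open>q + 2\<close> candidates for \<open>x\<^sub>i\<close> remain once (d) has ruled out
  the classes \<open>X\<^sub>l\<close> with \<open>l < i\<close>, while each earlier clique uses only one vertex of \<open>X\<^sub>i\<close>.
  Every clique built contains a copy of \<open>K\<^sub>k\<close> as in (b), hence the factor is connected.\<close>

lemma Gamma_subset: "Gamma V E g \<subseteq> V"
  unfolding Gamma_def by blast

lemma Gamma_antimono: "g \<subseteq> h \<Longrightarrow> Gamma V E h \<subseteq> Gamma V E g"
  unfolding Gamma_def by blast

lemma Diff_Gamma_eq_UN: "V - Gamma V E g = (\<Union>y\<in>g. V - Gamma V E {y})"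
  unfolding Gamma_def by blast

lemma simple_graph_finite: "simple_graph V E \<Longrightarrow> finite V"
  by (simp add: simple_graph_def)

lemma card_Diff_Gamma_singleton_le:
  assumes "simple_graph V E" "y \<in> V"
  shows "card (V - Gamma V E {y}) \<le> card V - min_degree V E"
proof -
  have fin: "finite V" using simple_graph_finite[OF assms(1)] .
  have "Gamma V E {y} = {u \<in> V. E y u}" unfolding Gamma_def by auto
  then have "card (Gamma V E {y}) = degree V E y" unfolding degree_def by simp
  moreover have "min_degree V E \<le> degree V E y"
    unfolding min_degree_def using fin assms(2) by simp
  moreover have "card (V - Gamma V E {y}) = card V - card (Gamma V E {y})"
    using fin by (simp add: card_Diff_subset finite_subset[OF Gamma_subset] Gamma_subset)
  ultimately show ?thesis by simp
qed

lemma card_Diff_Gamma_le: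
  assumes "simple_graph V E" "g \<subseteq> V"
  shows "card (V - Gamma V E g) \<le> card g * (card V - min_degree V E)"
proof -
  have "finite g" using assms finite_subset simple_graph_finite by blast
  then have "card (V - Gamma V E g) \<le> (\<Sum>y\<in>g. card (V - Gamma V E {y}))"
    unfolding Diff_Gamma_eq_UN[of V E g] by (rule card_UN_le)
  also have "\<dots> \<le> card g * (card V - min_degree V E)"
    using sum_bounded_above[of g "\<lambda>y. card (V - Gamma V E {y})"]
      card_Diff_Gamma_singleton_le[OF assms(1)] assms(2) by (simp add: subset_iff)
  finally show ?thesis .
qed

lemma card_Diff_Gamma_add_common_le:
  assumes graph: "simple_graph V E" and g: "g \<subseteq> V" "u \<in> g" "v \<in> g" "u \<noteq> v"
    and W: "W \<subseteq> V" "\<forall>w\<in>W. \<not> E u w \<and> \<not> E v w"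
  shows "card (V - Gamma V E g) + card W \<le> card g * (card V - min_degree V E)"
proof -
  let ?N = "\<lambda>y. V - Gamma V E {y}"
  have fin: "finite V" using simple_graph_finite[OF graph] .
  have "V - Gamma V E g = (?N u \<union> ?N v) \<union> (V - Gamma V E (g - {u, v}))"
    using g(2,3) unfolding Gamma_def by blast
  then have "card (V - Gamma V E g) \<le> card (?N u \<union> ?N v) + card (V - Gamma V E (g - {u, v}))"
    using card_Un_le[of "?N u \<union> ?N v" "V - Gamma V E (g - {u, v})"] by simp
  moreover have "card (?N u \<union> ?N v) + card W \<le> card (?N u) + card (?N v)"
  proof -
    have "W \<subseteq> ?N u \<inter> ?N v" using W unfolding Gamma_def by auto
    then have "card W \<le> card (?N u \<inter> ?N v)" using fin by (simp add: card_mono)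
    then show ?thesis using card_Un_Int[of "?N u" "?N v"] fin by simp
  qed
  moreover have "card (?N u) + card (?N v) \<le> 2 * (card V - min_degree V E)"
    using card_Diff_Gamma_singleton_le[OF graph, of u] card_Diff_Gamma_singleton_le[OF graph, of v] g
    by (simp add: subset_iff)
  moreover have "card (V - Gamma V E (g - {u, v})) \<le> (card g - 2) * (card V - min_degree V E)"
  proof -
    have "card (g - {u, v}) = card g - 2"
      using g finite_subset[OF g(1) fin] by (simp add: card_Diff_subset)
    then show ?thesis using card_Diff_Gamma_le[OF graph, of "g - {u, v}"] g(1) by auto
  qed
  moreover have "2 \<le> card g"
    using g finite_subset[OF g(1) fin] card_mono[of g "{u, v}"] by simp
  moreover from this have "(card g - 2) * (card V - min_degree V E) + 2 * (card V - min_degree V E)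
      = card g * (card V - min_degree V E)"
    by (metis add_mult_distrib le_add_diff_inverse2)
  ultimately show ?thesis by linarith
qed

lemma is_clique_subset: "is_clique V E K \<Longrightarrow> g \<subseteq> K \<Longrightarrow> is_clique V E g"
  unfolding is_clique_def by blast

lemma copy_K_insert:
  assumes graph: "simple_graph V E" and g: "copy_K V E r g" and y: "y \<in> Gamma V E g"
  shows "copy_K V E (Suc r) (insert y g)"
proof -
  have "E u y \<and> E y u" if "u \<in> g" for u
    using y that graph unfolding Gamma_def simple_graph_def by blast
  moreover have "y \<notin> g" using calculation graph unfolding simple_graph_def by blast
  moreover have "y \<in> V" using y unfolding Gamma_def by blast
  ultimately show ?thesis using g unfolding copy_K_def is_clique_def by auto
qed

lemma Int_Gamma_insert_eq_empty:
  assumes "independent E (S \<inter> Gamma V E g)" "y \<in> S \<inter> Gamma V E g"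
  shows "S \<inter> Gamma V E (insert y g) = {}"
  using assms unfolding independent_def Gamma_def by blast

lemma Kfactor_insert:
  assumes "Kfactor V E k \<F>" "copy_K V E (k+1) K" "K \<inter> \<Union>\<F> = {}"
  shows "Kfactor V E k (insert K \<F>)" "card (insert K \<F>) = Suc (card \<F>)"
proof -
  have "K \<noteq> {}" using assms(2) unfolding copy_K_def by auto
  then have "K \<notin> \<F>" using assms(3) by blast
  then show "card (insert K \<F>) = Suc (card \<F>)" using assms(1) by (simp add: Kfactor_def)
  show "Kfactor V E k (insert K \<F>)" using assms unfolding Kfactor_def by blast
qed

lemma factor_size_Kfactor:
  assumes "Kfactor V E k \<F>"
  shows "factor_size \<F> = (k+1) * card \<F>"
proof -
  have "pairwise disjnt \<F>" "\<forall>K\<in>\<F>. finite K \<and> card K = k+1"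
    using assms unfolding Kfactor_def copy_K_def pairwise_def disjnt_def by auto
  then show ?thesis unfolding factor_size_def by (simp add: card_Union_disjoint)
qed

lemma matching_in_subset: "matching_in E U M \<Longrightarrow> M' \<subseteq> M \<Longrightarrow> matching_in E U M'"
  unfolding matching_in_def by (meson subsetD)

lemma matching_in_insert_disjoint:
  assumes "matching_in E U (insert e M)" "e \<notin> M"
  shows "e \<inter> \<Union>M = {}"
proof -
  have "\<forall>f\<in>insert e M. \<forall>f'\<in>insert e M. f \<noteq> f' \<longrightarrow> f \<inter> f' = {}"
    using assms(1) unfolding matching_in_def by (rule conjunct2)
  then have "e \<inter> f = {}" if "f \<in> M" for f using that assms(2) by (metis insertCI)
  then show ?thesis by blast
qed

text \<open>Any copy of \<open>K\<^sub>k\<close> inside a member \<open>K\<close> is one \<open>Kstep\<close> away from the copy in \<open>T\<close> that \<open>K\<close>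
  contains.\<close>
lemma connected_KfactorI:
  assumes "Kfactor V E k \<F>"
    and "\<forall>g h. T g \<and> T h \<longrightarrow> Kconnected V E k g h"
    and "\<forall>K\<in>\<F>. \<exists>g\<subseteq>K. T g"
  shows "connected_Kfactor V E k \<F>"
  unfolding connected_Kfactor_def
proof (intro conjI allI impI)
  show "Kfactor V E k \<F>" by fact
  fix g h
  assume "(\<exists>K\<in>\<F>. g \<subseteq> K) \<and> copy_K V E k g \<and> (\<exists>L\<in>\<F>. h \<subseteq> L) \<and> copy_K V E k h"
  then obtain K L where g: "K \<in> \<F>" "g \<subseteq> K" "copy_K V E k g" and h: "L \<in> \<F>" "h \<subseteq> L" "copy_K V E k h"
    by blast
  obtain g' h' where g': "g' \<subseteq> K" "T g'" and h': "h' \<subseteq> L" "T h'"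
    using assms(3) g(1) h(1) by meson
  have conn: "Kconnected V E k g' h'" using assms(2) g'(2) h'(2) by blast
  have "copy_K V E (k+1) K" "copy_K V E (k+1) L"
    using assms(1) g(1) h(1) unfolding Kfactor_def by blast+
  moreover have "copy_K V E k g'" "copy_K V E k h'" using conn unfolding Kconnected_def by blast+
  ultimately have "Kstep V E k g g'" "Kstep V E k h' h"
    using g h g' h' unfolding Kstep_def by blast+
  moreover have "(Kstep V E k)\<^sup>*\<^sup>* g' h'" using conn unfolding Kconnected_def by blast
  ultimately have "(Kstep V E k)\<^sup>*\<^sup>* g h"
    by (meson converse_rtranclp_into_rtranclp rtranclp.rtrancl_into_rtrancl)
  then show "Kconnected V E k g h" unfolding Kconnected_def using g h by blast
qed

lemma card_edge_image_le: "card ({u, v} \<union> x ` {1..j}) \<le> j + 2"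
proof -
  have "card ({u, v} \<union> x ` {1..j}) \<le> card {u, v} + card (x ` {1..j})" by (rule card_Un_le)
  moreover have "card {u, v} \<le> 2" by (cases "u = v") auto
  moreover have "card (x ` {1..j}) \<le> j" using card_image_le[of "{1..j}" x] by simp
  ultimately show ?thesis by linarith
qed

lemma edge_transversal_Suc_subset:
  assumes "edge_transversal V E U1 X (Suc j) K"
  shows "\<exists>g\<subseteq>K. edge_transversal V E U1 X j g"
proof -
  obtain u v x where uvx: "u \<in> U1" "v \<in> U1" "E u v" "\<forall>i\<in>{1..Suc j}. x i \<in> X i"
    and K: "K = {u, v} \<union> x ` {1..Suc j}" "copy_K V E (Suc j + 2) K"
    using assms unfolding edge_transversal_def by blast
  define g where "g = {u, v} \<union> x ` {1..j}"
  have "K = insert (x (Suc j)) g" unfolding K g_def by (auto simp: atLeastAtMostSuc_conv)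
  then have "card K \<le> Suc (card g)" unfolding g_def by (simp add: card_insert_if)
  then have "card g = j + 2" using K(2) card_edge_image_le[of u v x j] unfolding g_def copy_K_def by simp
  moreover have "g \<subseteq> K" using \<open>K = insert (x (Suc j)) g\<close> by blast
  moreover have "is_clique V E g" using K(2) \<open>g \<subseteq> K\<close> is_clique_subset unfolding copy_K_def by blast
  ultimately have "copy_K V E (j + 2) g" unfolding copy_K_def g_def by simp
  then have "edge_transversal V E U1 X j g"
    unfolding edge_transversal_def using uvx
    by (intro exI[of _ u] exI[of _ v] exI[of _ x]) (simp add: g_def)
  then show ?thesis using \<open>g \<subseteq> K\<close> by blast
qed

locale partitioned_graph =
  fixes V :: "'a set" and E :: "'a \<Rightarrow> 'a \<Rightarrow> bool" and k :: nat
    and U1 U2 A :: "'a set" and X :: "nat \<Rightarrow> 'a set"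
  assumes graph: "simple_graph V E"
    and nonempty: "V \<noteq> {}"
    and k2: "k \<ge> 2"
    and cover: "U1 \<union> U2 \<union> A \<union> (\<Union>i\<in>{1..k-1}. X i) = V"
    and X_Int_U1: "\<forall>i\<in>{1..k-1}. X i \<inter> U1 = {}"
    and X_disjoint: "\<forall>i\<in>{1..k-1}. \<forall>j\<in>{1..k-1}. i \<noteq> j \<longrightarrow> X i \<inter> X j = {}"
    and no_edge_U1_U2: "\<forall>u\<in>U1. \<forall>v\<in>U2. \<not> E u v"
    and card_X_le: "\<forall>i\<in>{1..k-1}. card (X i) \<le> card V - min_degree V E"
    and independent_X_Int_Gamma: "\<forall>i\<in>{1..k-2}. \<forall>g. edge_transversal V E U1 X (i-1) g
              \<longrightarrow> independent E (X i \<inter> Gamma V E g)"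
begin

definition q :: int where
  "q = int k * int (min_degree V E) - int (k-1) * int (card V)
         + int (card U2) - int (card U1) - int (card A)"

lemma finite_V: "finite V"
  using simple_graph_finite[OF graph] .

lemma U1_subset: "U1 \<subseteq> V" and U2_subset: "U2 \<subseteq> V" and A_subset: "A \<subseteq> V"
  using cover by auto

lemma X_subset: "i \<in> {1..k-1} \<Longrightarrow> X i \<subseteq> V"
  using cover by auto

lemma min_degree_le_card: "min_degree V E \<le> card V"
proof -
  obtain y where "y \<in> V" using nonempty by blast
  then have "min_degree V E \<le> degree V E y" unfolding min_degree_def using finite_V by simp
  also have "\<dots> \<le> card V" unfolding degree_def using finite_V by (simp add: card_mono)
  finally show ?thesis .
qed

lemma card_UN_later_X_le:
  "card (\<Union>l\<in>{Suc i..k-1}. X l) \<le> (k - 1 - i) * (card V - min_degree V E)"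
proof -
  have "card (\<Union>l\<in>{Suc i..k-1}. X l) \<le> (\<Sum>l\<in>{Suc i..k-1}. card (X l))" by (rule card_UN_le) simp
  also have "\<dots> \<le> (k - 1 - i) * (card V - min_degree V E)"
    using sum_bounded_above[of "{Suc i..k-1}" "\<lambda>l. card (X l)"] card_X_le by auto
  finally show ?thesis .
qed

lemma Gamma_subset_classes:
  assumes uv: "u \<in> U1" "v \<in> U1" "u \<in> g" "v \<in> g"
    and earlier: "\<forall>l\<in>{1..i-1}. X l \<inter> Gamma V E g = {}"
  shows "Gamma V E g \<subseteq> (U1 - {u, v}) \<union> A \<union> (X i \<inter> Gamma V E g) \<union> (\<Union>l\<in>{Suc i..k-1}. X l)"
proof
  fix w assume w: "w \<in> Gamma V E g"
  then have "E u w" "E v w" "w \<in> V" using uv unfolding Gamma_def by auto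
  then have "w \<notin> U2" "w \<noteq> u" "w \<noteq> v"
    using no_edge_U1_U2 uv graph unfolding simple_graph_def by auto
  moreover have "w \<in> X i \<or> w \<in> (\<Union>l\<in>{Suc i..k-1}. X l)" if "l \<in> {1..k-1}" "w \<in> X l" for l
  proof (cases l i rule: linorder_cases)
    case less
    then show ?thesis using earlier that w by auto
  qed (use that in auto)
  ultimately show "w \<in> (U1 - {u, v}) \<union> A \<union> (X i \<inter> Gamma V E g) \<union> (\<Union>l\<in>{Suc i..k-1}. X l)"
    using cover \<open>w \<in> V\<close> w by blast
qed

lemma card_Gamma_le:
  assumes uv: "u \<in> U1" "v \<in> U1" "u \<noteq> v" "u \<in> g" "v \<in> g"
    and i: "i \<in> {1..k-1}" and earlier: "\<forall>l\<in>{1..i-1}. X l \<inter> Gamma V E g = {}"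
  shows "card (Gamma V E g) + 2
    \<le> card U1 + card A + card (X i \<inter> Gamma V E g) + (k - 1 - i) * (card V - min_degree V E)"
proof -
  let ?R = "\<Union>l\<in>{Suc i..k-1}. X l"
  have "?R \<subseteq> V" using X_subset i by (intro UN_least) auto
  then have "finite (U1 - {u, v})" "finite A" "finite (X i \<inter> Gamma V E g)" "finite ?R"
    using U1_subset A_subset X_subset[OF i] by (auto intro: finite_subset[OF _ finite_V])
  then have "card (Gamma V E g) \<le> card (U1 - {u, v}) + card A + card (X i \<inter> Gamma V E g) + card ?R"
    using card_mono[OF _ Gamma_subset_classes[OF uv(1,2,4,5) earlier]]
      card_Un_le[of "U1 - {u, v}" A] card_Un_le[of "U1 - {u, v} \<union> A" "X i \<inter> Gamma V E g"]
      card_Un_le[of "U1 - {u, v} \<union> A \<union> (X i \<inter> Gamma V E g)" ?R]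
    by simp
  moreover have "card (U1 - {u, v}) + 2 = card U1"
  proof -
    have "finite U1" using U1_subset finite_V by (rule finite_subset)
    then show ?thesis using uv card_mono[of U1 "{u, v}"] by (simp add: card_Diff_subset)
  qed
  ultimately show ?thesis using card_UN_later_X_le[of i] by linarith
qed

text \<open>The two endpoints \<open>u, v \<in> g\<close> lie in \<open>U\<^sub>1\<close> but not in \<open>\<Gamma>(g)\<close>, which accounts for the \<open>+ 2\<close>.\<close>
lemma card_X_Int_Gamma_ge:
  assumes uv: "u \<in> U1" "v \<in> U1" "u \<noteq> v" and g: "g \<subseteq> V" "u \<in> g" "v \<in> g" "card g = i + 1"
    and i: "i \<in> {1..k-1}" and earlier: "\<forall>l\<in>{1..i-1}. X l \<inter> Gamma V E g = {}"
  shows "q + 2 \<le> int (card (X i \<inter> Gamma V E g))"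
proof -
  define D where "D = card V - min_degree V E"
  have "card (V - Gamma V E g) + card U2 \<le> (i + 1) * D"
    using card_Diff_Gamma_add_common_le[OF graph g(1-3) uv(3) U2_subset] no_edge_U1_U2 uv g(4)
    unfolding D_def by simp
  moreover have "card (V - Gamma V E g) + card (Gamma V E g) = card V"
    using finite_V Gamma_subset by (metis card_Diff_subset card_mono finite_subset le_add_diff_inverse2)
  moreover have "int ((i + 1) * D) + int ((k - 1 - i) * D)
      = int k * int (card V) - int k * int (min_degree V E)"
  proof -
    have "i + 1 + (k - 1 - i) = k" using i by auto
    then have "(i + 1) * D + (k - 1 - i) * D = k * D" by (metis add_mult_distrib)
    then show ?thesis
      unfolding D_def using min_degree_le_card
      by (metis of_nat_add of_nat_diff of_nat_mult right_diff_distrib)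
  qed
  moreover have "int (k - 1) * int (card V) = int k * int (card V) - int (card V)"
    using k2 by (simp add: of_nat_diff left_diff_distrib)
  ultimately show ?thesis
    using card_Gamma_le[OF uv g(2,3) i earlier] unfolding q_def D_def by linarith
qed

lemma exists_fresh_common_neighbour:
  assumes "u \<in> U1" "v \<in> U1" "u \<noteq> v" "g \<subseteq> V" "u \<in> g" "v \<in> g" "card g = i + 1"
    and i: "i \<in> {1..k-1}" and "\<forall>l\<in>{1..i-1}. X l \<inter> Gamma V E g = {}"
    and used: "int (card (Used \<inter> X i)) \<le> q + 1"
  obtains y where "y \<in> X i \<inter> Gamma V E g" "y \<notin> Used"
proof -
  have "\<not> X i \<inter> Gamma V E g \<subseteq> Used \<inter> X i"
  proof
    assume "X i \<inter> Gamma V E g \<subseteq> Used \<inter> X i"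
    then have "card (X i \<inter> Gamma V E g) \<le> card (Used \<inter> X i)"
      using X_subset[OF i] by (intro card_mono) (auto intro: finite_subset[OF _ finite_V])
    then show False using card_X_Int_Gamma_ge[OF assms(1-9)] used by linarith
  qed
  then show thesis using that by blast
qed

text \<open>The last conjunct is maintained by (d): once \<open>x\<^sub>l\<close> is chosen from the independent set
  \<open>X\<^sub>l \<inter> \<Gamma>(g)\<close>, no common neighbour of the enlarged clique is left in \<open>X\<^sub>l\<close>.\<close>
lemma partial_transversal_avoiding:
  assumes uv: "u \<in> U1" "v \<in> U1" "E u v"
    and used: "\<forall>i\<in>{1..k-1}. int (card (Used \<inter> X i)) \<le> q + 1"
    and "j \<le> k - 1"
  shows "\<exists>x. (\<forall>l\<in>{1..j}. x l \<in> X l - Used) \<and> copy_K V E (j + 2) ({u, v} \<union> x ` {1..j})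
           \<and> (\<forall>l\<in>{1..j}. l \<le> k - 2 \<longrightarrow> X l \<inter> Gamma V E ({u, v} \<union> x ` {1..j}) = {})"
  using \<open>j \<le> k - 1\<close>
proof (induction j)
  case 0
  have "copy_K V E 2 {u, v}"
    using uv graph unfolding copy_K_def is_clique_def simple_graph_def by auto
  then show ?case by (simp add: numeral_2_eq_2)
next
  case (Suc j)
  then obtain x where x: "\<forall>l\<in>{1..j}. x l \<in> X l - Used"
    and g: "copy_K V E (j + 2) ({u, v} \<union> x ` {1..j})"
    and earlier: "\<forall>l\<in>{1..j}. l \<le> k - 2 \<longrightarrow> X l \<inter> Gamma V E ({u, v} \<union> x ` {1..j}) = {}"
    by auto
  define g where "g = {u, v} \<union> x ` {1..j}"
  have i: "Suc j \<in> {1..k-1}" using Suc.prems by simp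
  obtain y where y: "y \<in> X (Suc j) \<inter> Gamma V E g" "y \<notin> Used"
  proof (rule exists_fresh_common_neighbour[OF uv(1,2) _ _ _ _ _ i])
    show "u \<noteq> v" using uv graph unfolding simple_graph_def by auto
    show "g \<subseteq> V" "card g = Suc j + 1" using g unfolding g_def copy_K_def is_clique_def by auto
    show "u \<in> g" "v \<in> g" unfolding g_def by auto
    show "\<forall>l\<in>{1..Suc j - 1}. X l \<inter> Gamma V E g = {}" using earlier Suc.prems unfolding g_def by auto
    show "int (card (Used \<inter> X (Suc j))) \<le> q + 1" using used i by blast
  qed
  define x' where "x' = x(Suc j := y)"
  have img: "{u, v} \<union> x' ` {1..Suc j} = insert y g"
    unfolding x'_def g_def by (auto simp: fun_upd_image atLeastAtMostSuc_conv)
  show ?case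
  proof (intro exI[of _ x'] conjI ballI impI)
    show "x' l \<in> X l - Used" if "l \<in> {1..Suc j}" for l
      using x y that unfolding x'_def by auto
    show "copy_K V E (Suc j + 2) ({u, v} \<union> x' ` {1..Suc j})"
      unfolding img using copy_K_insert[OF graph g[folded g_def]] y by simp
    show "X l \<inter> Gamma V E ({u, v} \<union> x' ` {1..Suc j}) = {}" if l: "l \<in> {1..Suc j}" "l \<le> k - 2" for l
    proof (cases "l = Suc j")
      case True
      have "edge_transversal V E U1 X j g"
        unfolding edge_transversal_def using uv x g
        by (intro exI[of _ u] exI[of _ v] exI[of _ x]) (simp add: g_def)
      then have "independent E (X (Suc j) \<inter> Gamma V E g)"
        using independent_X_Int_Gamma l True by auto
      then show ?thesis using Int_Gamma_insert_eq_empty y(1) True img by simp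
    next
      case False
      then have "X l \<inter> Gamma V E g = {}" using earlier l unfolding g_def by auto
      moreover have "Gamma V E (insert y g) \<subseteq> Gamma V E g" by (rule Gamma_antimono) blast
      ultimately show ?thesis unfolding img by blast
    qed
  qed
qed

lemma edge_transversal_avoiding:
  assumes uv: "u \<in> U1" "v \<in> U1" "E u v" "u \<notin> Used" "v \<notin> Used"
    and used: "\<forall>i\<in>{1..k-1}. int (card (Used \<inter> X i)) \<le> q + 1"
  shows "\<exists>K. edge_transversal V E U1 X (k-1) K \<and> K \<inter> U1 = {u, v} \<and> K \<inter> Used = {}"
proof -
  obtain x where x: "\<forall>l\<in>{1..k-1}. x l \<in> X l - Used"
    and K: "copy_K V E (k - 1 + 2) ({u, v} \<union> x ` {1..k-1})"
    using partial_transversal_avoiding[OF uv(1-3) used le_refl] by blast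
  have "edge_transversal V E U1 X (k-1) ({u, v} \<union> x ` {1..k-1})"
    unfolding edge_transversal_def using uv x K
    by (intro exI[of _ u] exI[of _ v] exI[of _ x]) simp
  moreover have "({u, v} \<union> x ` {1..k-1}) \<inter> U1 = {u, v}" using x X_Int_U1 uv by blast
  moreover have "({u, v} \<union> x ` {1..k-1}) \<inter> Used = {}" using x uv by blast
  ultimately show ?thesis by blast
qed

lemma card_edge_transversal_Int_X_le:
  assumes "edge_transversal V E U1 X (k-1) K" and i: "i \<in> {1..k-1}"
  shows "card (K \<inter> X i) \<le> 1"
proof -
  obtain u v x where uvx: "u \<in> U1" "v \<in> U1" "\<forall>l\<in>{1..k-1}. x l \<in> X l" "K = {u, v} \<union> x ` {1..k-1}"
    using assms(1) unfolding edge_transversal_def by blast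
  have "w = x i" if w: "w \<in> K" "w \<in> X i" for w
  proof -
    have "w \<notin> U1" using X_Int_U1 i w(2) by blast
    then obtain l where l: "l \<in> {1..k-1}" "w = x l" using w(1) uvx by auto
    then have "l = i" using X_disjoint uvx(3) i w(2) by blast
    then show ?thesis using l by simp
  qed
  then have "K \<inter> X i \<subseteq> {x i}" by blast
  then show ?thesis using card_mono[of "{x i}" "K \<inter> X i"] by simp
qed

lemma card_Union_Int_X_le:
  assumes "finite \<F>" "\<forall>K\<in>\<F>. edge_transversal V E U1 X (k-1) K" "i \<in> {1..k-1}"
  shows "card (\<Union>\<F> \<inter> X i) \<le> card \<F>"
proof -
  have "\<Union>\<F> \<inter> X i = (\<Union>K\<in>\<F>. K \<inter> X i)" by blast
  then have "card (\<Union>\<F> \<inter> X i) \<le> (\<Sum>K\<in>\<F>. card (K \<inter> X i))"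
    using card_UN_le[OF assms(1), of "\<lambda>K. K \<inter> X i"] by simp
  also have "\<dots> \<le> card \<F>"
    using sum_bounded_above[of \<F> "\<lambda>K. card (K \<inter> X i)" 1] card_edge_transversal_Int_X_le assms(2,3)
    by simp
  finally show ?thesis .
qed

lemma transversal_Kfactor_exists:
  assumes "finite M" "matching_in E U1 M" "int (card M) \<le> q + 2"
  shows "\<exists>\<F>. Kfactor V E k \<F> \<and> (\<forall>K\<in>\<F>. edge_transversal V E U1 X (k-1) K)
           \<and> card \<F> = card M \<and> \<Union>\<F> \<inter> U1 \<subseteq> \<Union>M"
  using assms
proof (induction M rule: finite_induct)
  case empty
  show ?case by (intro exI[of _ "{}"]) (simp add: Kfactor_def)
next
  case (insert e M)
  have "matching_in E U1 M" using insert.prems(1) matching_in_subset by blast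
  moreover have "int (card M) \<le> q + 2" using insert.prems(2) insert.hyps by simp
  ultimately obtain \<F> where \<F>: "Kfactor V E k \<F>" "\<forall>K\<in>\<F>. edge_transversal V E U1 X (k-1) K"
      "card \<F> = card M" "\<Union>\<F> \<inter> U1 \<subseteq> \<Union>M"
    using insert.IH by blast
  have "\<exists>u v. e = {u, v} \<and> u \<in> U1 \<and> v \<in> U1 \<and> E u v"
    using insert.prems(1) unfolding matching_in_def by simp
  then obtain u v where e: "e = {u, v}" "u \<in> U1" "v \<in> U1" "E u v" by (elim exE conjE)
  have "e \<inter> \<Union>M = {}" using matching_in_insert_disjoint insert.prems(1) insert.hyps(2) by blast
  then have "u \<notin> \<Union>\<F>" "v \<notin> \<Union>\<F>" using \<F>(4) e by auto
  moreover have "int (card (\<Union>\<F> \<inter> X i)) \<le> q + 1" if "i \<in> {1..k-1}" for i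
    using card_Union_Int_X_le[OF _ \<F>(2) that] \<F>(1,3) insert.prems(2) insert.hyps
    unfolding Kfactor_def by simp
  ultimately obtain K where K: "edge_transversal V E U1 X (k-1) K" "K \<inter> U1 = {u, v}" "K \<inter> \<Union>\<F> = {}"
    using edge_transversal_avoiding[OF e(2-4)] by blast
  have "copy_K V E (k+1) K" using K(1) k2 unfolding edge_transversal_def by auto
  then have "Kfactor V E k (insert K \<F>)" "card (insert K \<F>) = Suc (card \<F>)"
    using Kfactor_insert \<F>(1) K(3) by auto
  then show ?case using \<F> K e insert.hyps by (intro exI[of _ "insert K \<F>"]) auto
qed

lemma connected_Kfactor_from_matching:
  assumes b: "\<forall>g h. edge_transversal V E U1 X (k-2) g \<and> edge_transversal V E U1 X (k-2) h
              \<longrightarrow> Kconnected V E k g h"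
    and "finite M" "matching_in E U1 M" "int (card M) \<le> q + 2"
  shows "\<exists>\<F>. connected_Kfactor V E k \<F> \<and> factor_size \<F> = (k+1) * card M"
proof -
  obtain \<F> where \<F>: "Kfactor V E k \<F>" "\<forall>K\<in>\<F>. edge_transversal V E U1 X (k-1) K"
      "card \<F> = card M"
    using transversal_Kfactor_exists[OF assms(2-4)] by blast
  have "k - 1 = Suc (k - 2)" using k2 by simp
  then have "connected_Kfactor V E k \<F>"
    using connected_KfactorI[OF \<F>(1) b] \<F>(2) edge_transversal_Suc_subset by metis
  then show ?thesis using factor_size_Kfactor[OF \<F>(1)] \<F>(3) by auto
qed

end

theorem lemma5p6:
  fixes V :: "'a set" and E :: "'a \<Rightarrow> 'a \<Rightarrow> bool" and k :: nat
    and U1 U2 A :: "'a set" and X :: "nat \<Rightarrow> 'a set" and F :: "'a set set"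
  assumes graph: "simple_graph V E"
    and nonempty: "V \<noteq> {}"
    and k2: "k \<ge> 2"
    and mindeg: "k * min_degree V E > (k - 1) * card V"
    and cover: "U1 \<union> U2 \<union> A \<union> (\<Union>i\<in>{1..k-1}. X i) = V"
    and disj1: "U1 \<inter> U2 = {}" "U1 \<inter> A = {}" "U2 \<inter> A = {}"
    and disj2: "\<forall>i\<in>{1..k-1}. X i \<inter> U1 = {} \<and> X i \<inter> U2 = {} \<and> X i \<inter> A = {}"
    and disj3: "\<forall>i\<in>{1..k-1}. \<forall>j\<in>{1..k-1}. i \<noteq> j \<longrightarrow> X i \<inter> X j = {}"
    and a: "\<forall>u\<in>U1. \<forall>v\<in>U2. \<not> E u v"
    and b: "\<forall>g h. edge_transversal V E U1 X (k-2) g \<and> edge_transversal V E U1 X (k-2) h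
              \<longrightarrow> Kconnected V E k g h"
    and c: "\<forall>i\<in>{1..k-1}. card (X i) \<le> card V - min_degree V E"
    and d: "\<forall>i\<in>{1..k-2}. \<forall>g. edge_transversal V E U1 X (i-1) g
              \<longrightarrow> independent E (X i \<inter> Gamma V E g)"
    and F: "matching_in E U1 F"
  shows "\<exists>\<F>. connected_Kfactor V E k \<F> \<and>
     int (factor_size \<F>) \<ge> int (k+1) * min (int (card F))
        (int k * int (min_degree V E) - int (k-1) * int (card V)
           + int (card U2) - int (card U1) - int (card A))"
proof -
  interpret partitioned_graph V E k U1 U2 A X
    using graph nonempty k2 cover disj2 disj3 a c d by unfold_locales auto
  define m where "m = min (int (card F)) q"
  have q_eq: "int k * int (min_degree V E) - int (k-1) * int (card V)
      + int (card U2) - int (card U1) - int (card A) = q"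
    unfolding q_def ..
  show ?thesis
  proof (cases "m \<le> 0")
    case True
    have "connected_Kfactor V E k {}" unfolding connected_Kfactor_def Kfactor_def by simp
    then show ?thesis
      using True unfolding q_eq m_def[symmetric] factor_size_def
      by (intro exI[of _ "{}"]) (simp add: mult_nonneg_nonpos)
  next
    case False
    then have "nat m \<le> card F" unfolding m_def by simp
    then obtain M where M: "M \<subseteq> F" "card M = nat m" "finite M"
      by (rule obtain_subset_with_card_n)
    moreover have "int (card M) \<le> q + 2" using M(2) False unfolding m_def by linarith
    ultimately obtain \<F> where "connected_Kfactor V E k \<F>" "factor_size \<F> = (k+1) * nat m"
      using connected_Kfactor_from_matching[OF b M(3) matching_in_subset[OF F M(1)]] M(2) by auto
    then show ?thesis using False unfolding q_eq m_def[symmetric]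
      by (intro exI[of _ \<F>]) (simp add: algebra_simps)
  qed
qed

end
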